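(* There is an absolute constant $c>0$ such that the following holds for all sufficiently large $n$. Let $L_1,\dots,L_n\colon\mathbb{F}_2^m\to\mathbb{F}_2$ be polynomials of degree at most $1$ and let $\mathcal{L}=(L_1,\dots,L_n)$ be the distribution on $\{0,1\}^n$ of $(L_1(X),\dots,L_n(X))$ for $X$ uniform on $\mathbb{F}_2^m$. Then \[ \|\mathcal{L}-\mathrm{Ber}(1/3)^{\otimes n}\|_{\mathtt{TV}}\ \ge\ 1-2^{-cn}. \]
   Context: $\mathrm{Ber}(1/3)^{\otimes n}$ is the product of $n$ independent Bernoulli$(1/3)$ bits. The total variation distance is $\|\mathcal{D}_1-\mathcal{D}_2\|_{\mathtt{TV}}=\frac12\sum_x|\mathcal{D}_1(x)-\mathcal{D}_2(x)|$. *)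

theory Defs
  imports Complex_Main
begin

text \<open>Vectors in F_2^k are boolean lists of length k (True = 1, False = 0).\<close>
definition cube :: "nat \<Rightarrow> bool list set" where
  "cube k = {xs. length xs = k}"

definition deg_le1_F2 :: "nat \<Rightarrow> (bool list \<Rightarrow> bool) \<Rightarrow> bool" where
  "deg_le1_F2 m f \<longleftrightarrow> (\<exists>(a0::bool) (a::nat \<Rightarrow> bool). \<forall>x\<in>cube m.
      f x = odd (of_bool a0 + (\<Sum>i<m. of_bool (a i \<and> x ! i) :: nat)))"

text \<open>Law of (L_0(X),...,L_{n-1}(X)) for X uniform on F_2^m.\<close>
definition lin_dist :: "nat \<Rightarrow> nat \<Rightarrow> (nat \<Rightarrow> bool list \<Rightarrow> bool) \<Rightarrow> bool list \<Rightarrow> real" where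
  "lin_dist n m L y = real (card {x\<in>cube m. map (\<lambda>j. L j x) [0..<n] = y}) / 2 ^ m"

definition ber_prod :: "nat \<Rightarrow> bool list \<Rightarrow> real" where
  "ber_prod n y = (\<Prod>j<n. if y ! j then 1/3 else 2/3)"

definition tv_dist :: "nat \<Rightarrow> (bool list \<Rightarrow> real) \<Rightarrow> (bool list \<Rightarrow> real) \<Rightarrow> real" where
  "tv_dist n D1 D2 = (1/2) * (\<Sum>y\<in>cube n. \<bar>D1 y - D2 y\<bar>)"

end

theory Submission
  imports Defs
begin

text \<open>Write \<open>P\<close> for the law of \<open>(L\<^sub>1(X),\<dots>,L\<^sub>n(X))\<close> and \<open>Q = Ber(1/3)\<^sup>n\<close>. Since the total
  variation distance is \<open>1 - \<Sum> min(P,Q) \<ge> 1 - \<Sum> sqrt(P Q)\<close>, it suffices to bound the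
  Bhattacharyya coefficient \<open>\<Sum> sqrt(P Q)\<close> by \<open>\<rho>\<^sup>n\<close> with \<open>\<rho> = sqrt(1/6) + sqrt(1/3) < 1\<close>.
  Reveal the coordinates one at a time: conditioned on the first \<open>k\<close> values, \<open>X\<close> is uniform on
  an affine subspace of \<open>F\<^sub>2\<^sup>m\<close>, on which the affine function \<open>L\<^sub>k\<^sub>+\<^sub>1\<close> is either constant or
  balanced. So every conditional bit is a point mass or a fair coin, whose Bhattacharyya
  coefficient against \<open>Ber(1/3)\<close> is \<open>sqrt(1/3)\<close>, \<open>sqrt(2/3)\<close> or \<open>\<rho>\<close>, and these factors multiply
  along the chain. The constant is \<open>c = -log\<^sub>2 \<rho>\<close>, valid for every \<open>n\<close>.\<close>

lemma finite_cube [simp]: "finite (cube k)"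
  unfolding cube_def using finite_lists_length_eq[of "UNIV::bool set" k] by simp

lemma card_cube: "card (cube k) = 2 ^ k"
  unfolding cube_def using card_lists_length_eq[of "UNIV::bool set" k] by simp

lemma cube_0: "cube 0 = {[]}"
  by (auto simp: cube_def)

lemma cube_Suc: "cube (Suc k) = (\<lambda>y. y @ [True]) ` cube k \<union> (\<lambda>y. y @ [False]) ` cube k"
proof
  show "cube (Suc k) \<subseteq> (\<lambda>y. y @ [True]) ` cube k \<union> (\<lambda>y. y @ [False]) ` cube k"
  proof
    fix z assume z: "z \<in> cube (Suc k)"
    then have "z = butlast z @ [last z]" and "butlast z \<in> cube k"
      by (auto simp: cube_def intro!: append_butlast_last_id[symmetric])
    then show "z \<in> (\<lambda>y. y @ [True]) ` cube k \<union> (\<lambda>y. y @ [False]) ` cube k"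
      by (cases "last z") auto
  qed
qed (auto simp: cube_def)

lemma sum_cube_Suc:
  "(\<Sum>y\<in>cube (Suc k). f y) = (\<Sum>y\<in>cube k. f (y @ [True]) + f (y @ [False]))"
proof -
  have "(\<Sum>y\<in>cube (Suc k). f y)
      = (\<Sum>y\<in>(\<lambda>y. y @ [True]) ` cube k. f y) + (\<Sum>y\<in>(\<lambda>y. y @ [False]) ` cube k. f y)"
    unfolding cube_Suc by (rule sum.union_disjoint) auto
  also have "\<dots> = (\<Sum>y\<in>cube k. f (y @ [True])) + (\<Sum>y\<in>cube k. f (y @ [False]))"
    by (subst (1 2) sum.reindex) (auto simp: inj_on_def)
  finally show ?thesis
    by (simp add: sum.distrib)
qed

subsection \<open>Affine functions and affine subspaces of \<open>F\<^sub>2\<^sup>m\<close>\<close>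

definition add_F2 :: "bool list \<Rightarrow> bool list \<Rightarrow> bool list" where
  "add_F2 x u = map2 (\<noteq>) x u"

lemma add_F2_cube: "x \<in> cube m \<Longrightarrow> u \<in> cube m \<Longrightarrow> add_F2 x u \<in> cube m"
  by (simp add: cube_def add_F2_def)

lemma nth_add_F2: "x \<in> cube m \<Longrightarrow> u \<in> cube m \<Longrightarrow> i < m \<Longrightarrow> add_F2 x u ! i = (x ! i \<noteq> u ! i)"
  by (simp add: cube_def add_F2_def)

lemma add_F2_add_F2_cancel:
  "x \<in> cube m \<Longrightarrow> u \<in> cube m \<Longrightarrow> v \<in> cube m \<Longrightarrow>
    add_F2 (add_F2 (add_F2 (add_F2 x u) v) u) v = x"
  by (rule nth_equalityI) (auto simp: cube_def add_F2_def)

lemma odd_sum_of_bool_xor: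
  "finite A \<Longrightarrow> odd (\<Sum>i\<in>A. of_bool (P i \<noteq> Q i) :: nat)
    \<longleftrightarrow> odd (\<Sum>i\<in>A. of_bool (P i) :: nat) \<noteq> odd (\<Sum>i\<in>A. of_bool (Q i) :: nat)"
  by (induction A rule: finite_induct) (auto simp del: sum_of_bool_eq)

lemma deg_le1_F2_add3:
  assumes "deg_le1_F2 m f" "x \<in> cube m" "u \<in> cube m" "v \<in> cube m"
  shows "f (add_F2 (add_F2 x u) v) = ((f x \<noteq> f u) \<noteq> f v)"
proof -
  obtain a0 a where f: "\<And>x. x \<in> cube m \<Longrightarrow> f x = odd (of_bool a0 + (\<Sum>i<m. of_bool (a i \<and> x ! i) :: nat))"
    using assms(1) unfolding deg_le1_F2_def by blast
  define lin where "lin x = odd (\<Sum>i<m. of_bool (a i \<and> x ! i) :: nat)" for x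
  have "(\<Sum>i<m. of_bool (a i \<and> add_F2 (add_F2 x u) v ! i) :: nat)
      = (\<Sum>i<m. of_bool (((a i \<and> x ! i) \<noteq> (a i \<and> u ! i)) \<noteq> (a i \<and> v ! i)))"
    by (rule sum.cong) (use assms(2-4) in \<open>auto simp: nth_add_F2[OF add_F2_cube] nth_add_F2\<close>)
  then have "lin (add_F2 (add_F2 x u) v) = ((lin x \<noteq> lin u) \<noteq> lin v)"
    unfolding lin_def by (simp only: odd_sum_of_bool_xor[OF finite_lessThan])
  moreover have "f y = (a0 \<noteq> lin y)" if "y \<in> cube m" for y
    using f[OF that] by (cases a0) (simp_all add: lin_def)
  ultimately show ?thesis
    using assms(2-4) by (auto simp: add_F2_cube)
qed

text \<open>A nonempty subset of \<open>F\<^sub>2\<^sup>m\<close> closed under \<open>(x, u, v) \<mapsto> x + u + v\<close> is a coset of a linear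
  subspace.\<close>
definition affine_F2 :: "nat \<Rightarrow> bool list set \<Rightarrow> bool" where
  "affine_F2 m S \<longleftrightarrow> S \<subseteq> cube m \<and> (\<forall>x\<in>S. \<forall>u\<in>S. \<forall>v\<in>S. add_F2 (add_F2 x u) v \<in> S)"

lemma map_upt_eq_iff: "map f [0..<k] = y \<longleftrightarrow> length y = k \<and> (\<forall>j<k. f j = y ! j)"
  by (auto simp: list_eq_iff_nth_eq)

lemma affine_F2_fibre:
  assumes L: "\<forall>j<k. deg_le1_F2 m (L j)"
  shows "affine_F2 m {x \<in> cube m. map (\<lambda>j. L j x) [0..<k] = y}"
  unfolding affine_F2_def map_upt_eq_iff
  using deg_le1_F2_add3[OF L[rule_format]] by (simp add: add_F2_cube)

lemma affine_F2_balanced: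
  assumes S: "affine_F2 m S" and f: "deg_le1_F2 m f"
  shows "card {x\<in>S. f x} = 0 \<or> card {x\<in>S. \<not> f x} = 0 \<or> card {x\<in>S. f x} = card {x\<in>S. \<not> f x}"
proof (cases "\<exists>u\<in>S. \<exists>v\<in>S. f u \<and> \<not> f v")
  case True
  then obtain u v where uv: "u \<in> S" "v \<in> S" "f u" "\<not> f v"
    by blast
  have S_cube: "S \<subseteq> cube m" and finite_S: "finite S"
    using S finite_subset[OF _ finite_cube] by (auto simp: affine_F2_def)
  \<comment> \<open>translating by \<open>u + v\<close> is an involution of \<open>S\<close> that flips \<open>f\<close>\<close>
  define g where "g x = add_F2 (add_F2 x u) v" for x
  have g_S: "g x \<in> S" if "x \<in> S" for x
    using S that uv by (auto simp: affine_F2_def g_def)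
  have f_g: "f (g x) = (\<not> f x)" if "x \<in> S" for x
    using that uv S_cube deg_le1_F2_add3[OF f, of x u v] by (auto simp: g_def)
  have "g (g x) = x" if "x \<in> S" for x
    using that uv S_cube add_F2_add_F2_cancel[of x m u v] by (auto simp: g_def)
  then have inj_g: "inj_on g S"
    by (metis inj_on_inverseI)
  have "card {x\<in>S. f x} \<le> card {x\<in>S. \<not> f x}" "card {x\<in>S. \<not> f x} \<le> card {x\<in>S. f x}"
    by (auto intro!: card_inj_on_le[where f = g] inj_on_subset[OF inj_g] simp: finite_S g_S f_g)
  then show ?thesis
    by simp
next
  case False
  then have "{x\<in>S. f x} = {} \<or> {x\<in>S. \<not> f x} = {}"
    by blast
  then show ?thesis
    by (metis card.empty)
qed

subsection \<open>Chains of conditional bits\<close>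

definition marginals_consistent :: "nat \<Rightarrow> (nat \<Rightarrow> bool list \<Rightarrow> real) \<Rightarrow> bool" where
  "marginals_consistent n D \<longleftrightarrow>
    (\<forall>k<n. \<forall>y\<in>cube k. D k y = D (Suc k) (y @ [True]) + D (Suc k) (y @ [False]))"

definition fair_or_constant_bits :: "nat \<Rightarrow> (nat \<Rightarrow> bool list \<Rightarrow> real) \<Rightarrow> bool" where
  "fair_or_constant_bits n D \<longleftrightarrow>
    (\<forall>k<n. \<forall>y\<in>cube k. D (Suc k) (y @ [True]) = 0 \<or> D (Suc k) (y @ [False]) = 0
                      \<or> D (Suc k) (y @ [True]) = D (Suc k) (y @ [False]))"

lemma sum_cube_marginals_consistent:
  assumes "marginals_consistent n D" "k \<le> n"
  shows "(\<Sum>y\<in>cube k. D k y) = D 0 []"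
  using assms(2)
proof (induction k)
  case 0
  show ?case by (simp add: cube_0)
next
  case (Suc k)
  have "(\<Sum>y\<in>cube (Suc k). D (Suc k) y) = (\<Sum>y\<in>cube k. D k y)"
    unfolding sum_cube_Suc
    by (rule sum.cong) (use assms(1) Suc.prems in \<open>auto simp: marginals_consistent_def\<close>)
  with Suc show ?case by simp
qed

lemma lin_dist_nonneg: "0 \<le> lin_dist k m L y"
  by (simp add: lin_dist_def)

lemma lin_dist_Nil: "lin_dist 0 m L [] = 1"
  by (simp add: lin_dist_def card_cube)

lemma lin_dist_snoc:
  "length y = k \<Longrightarrow> lin_dist (Suc k) m L (y @ [b]) =
    real (card {x \<in> {x \<in> cube m. map (\<lambda>j. L j x) [0..<k] = y}. L k x = b}) / 2 ^ m"
  unfolding lin_dist_def by (simp add: conj_assoc)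

lemma marginals_consistent_lin_dist: "marginals_consistent n (\<lambda>k. lin_dist k m L)"
  unfolding marginals_consistent_def
proof (intro allI impI ballI)
  fix k y assume "y \<in> cube k"
  then have y: "length y = k" by (simp add: cube_def)
  let ?S = "{x \<in> cube m. map (\<lambda>j. L j x) [0..<k] = y}"
  have "card ?S = card ({x \<in> ?S. L k x = True} \<union> {x \<in> ?S. L k x = False})"
    by (rule arg_cong[where f = card]) auto
  also have "\<dots> = card {x \<in> ?S. L k x = True} + card {x \<in> ?S. L k x = False}"
    by (rule card_Un_disjoint) auto
  finally show "lin_dist k m L y = lin_dist (Suc k) m L (y @ [True]) + lin_dist (Suc k) m L (y @ [False])"
    unfolding lin_dist_snoc[OF y] by (simp add: lin_dist_def add_divide_distrib)
qed

lemma fair_or_constant_bits_lin_dist: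
  assumes "\<forall>j<n. deg_le1_F2 m (L j)"
  shows "fair_or_constant_bits n (\<lambda>k. lin_dist k m L)"
  unfolding fair_or_constant_bits_def
proof (intro allI impI ballI)
  fix k y assume "k < n" "y \<in> cube k"
  then have "affine_F2 m {x \<in> cube m. map (\<lambda>j. L j x) [0..<k] = y}" and "deg_le1_F2 m (L k)"
    using assms by (auto intro: affine_F2_fibre)
  from affine_F2_balanced[OF this] \<open>y \<in> cube k\<close>
  show "lin_dist (Suc k) m L (y @ [True]) = 0 \<or> lin_dist (Suc k) m L (y @ [False]) = 0
      \<or> lin_dist (Suc k) m L (y @ [True]) = lin_dist (Suc k) m L (y @ [False])"
    by (auto simp: lin_dist_snoc cube_def)
qed

lemma ber_prod_nonneg: "0 \<le> ber_prod k y"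
  unfolding ber_prod_def by (rule prod_nonneg) auto

lemma ber_prod_snoc:
  assumes "length y = k"
  shows "ber_prod (Suc k) (y @ [b]) = ber_prod k y * (if b then 1/3 else 2/3)"
proof -
  have "(\<Prod>j<k. if (y @ [b]) ! j then 1/3 else 2/3) = (\<Prod>j<k. if y ! j then 1/3 else (2/3::real))"
    by (rule prod.cong) (auto simp: nth_append assms)
  then show ?thesis
    unfolding ber_prod_def by (simp add: assms nth_append)
qed

lemma marginals_consistent_ber_prod: "marginals_consistent n ber_prod"
  by (auto simp: marginals_consistent_def cube_def ber_prod_snoc)

subsection \<open>The Bhattacharyya coefficient\<close>

text \<open>The Bhattacharyya coefficient of \<open>Ber(1/2)\<close> against \<open>Ber(1/3)\<close>.\<close>
definition fair_coin_affinity :: real where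
  "fair_coin_affinity = sqrt (1/6) + sqrt (1/3)"

lemma fair_coin_affinity_pos: "0 < fair_coin_affinity"
  by (simp add: fair_coin_affinity_def add_pos_pos)

lemma fair_coin_affinity_less_1: "fair_coin_affinity < 1"
proof -
  have "sqrt (1/6) < 41/100"
    by (rule real_less_lsqrt) (simp_all add: power2_eq_square)
  moreover have "sqrt (1/3) < (58/100 :: real)"
    by (rule real_less_lsqrt) (simp_all add: power2_eq_square)
  ultimately show ?thesis
    by (simp add: fair_coin_affinity_def)
qed

lemma bhattacharyya_bit_le:
  fixes a b q :: real
  assumes "0 \<le> a" "0 \<le> b" "0 \<le> q" "a = 0 \<or> b = 0 \<or> a = b"
  shows "sqrt (a * (q * (1/3))) + sqrt (b * (q * (2/3))) \<le> fair_coin_affinity * sqrt ((a + b) * q)"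
proof -
  have sqrt_2_3: "sqrt (2/3) = 2 * sqrt (1/6)"
    using real_sqrt_mult[of 4 "1/6"] by simp
  have "sqrt (1/6) \<le> sqrt (1/3)"
    by simp
  then have bit_le: "sqrt (1/3) \<le> fair_coin_affinity" "sqrt (2/3) \<le> fair_coin_affinity"
    by (simp_all add: fair_coin_affinity_def sqrt_2_3)
  have fair: "sqrt 2 * fair_coin_affinity = sqrt (1/3) + sqrt (2/3)"
    by (simp add: fair_coin_affinity_def distrib_left flip: real_sqrt_mult)
  have split: "sqrt (x * (q * r)) = sqrt (x * q) * sqrt r" for x r
    by (simp add: mult.assoc flip: real_sqrt_mult)
  have double: "sqrt ((a + a) * q) = sqrt 2 * sqrt (a * q)"
    by (simp add: mult.assoc flip: real_sqrt_mult)
  consider "a = 0" | "b = 0" | "a = b"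
    using assms(4) by blast
  then show ?thesis
  proof cases
    case 1
    have "sqrt (b * q) * sqrt (2/3) \<le> sqrt (b * q) * fair_coin_affinity"
      using bit_le(2) by (rule mult_left_mono) (simp add: assms)
    with 1 show ?thesis
      unfolding split by (simp add: mult.commute)
  next
    case 2
    have "sqrt (a * q) * sqrt (1/3) \<le> sqrt (a * q) * fair_coin_affinity"
      using bit_le(1) by (rule mult_left_mono) (simp add: assms)
    with 2 show ?thesis
      unfolding split by (simp add: mult.commute)
  next
    case 3
    have "sqrt (a * (q * (1/3))) + sqrt (b * (q * (2/3))) = sqrt (a * q) * (sqrt (1/3) + sqrt (2/3))"
      unfolding 3[symmetric] split by (simp only: distrib_left)
    also have "\<dots> = fair_coin_affinity * sqrt ((a + b) * q)"
      unfolding 3[symmetric] double fair[symmetric] by (simp only: mult_ac)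
    finally show ?thesis
      by simp
  qed
qed

lemma bhattacharyya_ber_prod_le:
  assumes "marginals_consistent n D" "fair_or_constant_bits n D"
    and nonneg: "\<And>k y. 0 \<le> D k y" and "D 0 [] \<le> 1" and "k \<le> n"
  shows "(\<Sum>y\<in>cube k. sqrt (D k y * ber_prod k y)) \<le> fair_coin_affinity ^ k"
  using \<open>k \<le> n\<close>
proof (induction k)
  case 0
  show ?case using \<open>D 0 [] \<le> 1\<close> by (simp add: cube_0 ber_prod_def)
next
  case (Suc k)
  have step: "sqrt (D (Suc k) (y @ [True]) * ber_prod (Suc k) (y @ [True]))
      + sqrt (D (Suc k) (y @ [False]) * ber_prod (Suc k) (y @ [False]))
      \<le> fair_coin_affinity * sqrt (D k y * ber_prod k y)" if y: "y \<in> cube k" for y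
  proof -
    have "length y = k" using y by (simp add: cube_def)
    moreover have "D k y = D (Suc k) (y @ [True]) + D (Suc k) (y @ [False])"
      using assms(1) Suc.prems y by (simp add: marginals_consistent_def)
    moreover have "D (Suc k) (y @ [True]) = 0 \<or> D (Suc k) (y @ [False]) = 0
        \<or> D (Suc k) (y @ [True]) = D (Suc k) (y @ [False])"
      using assms(2) Suc.prems y by (simp add: fair_or_constant_bits_def)
    ultimately show ?thesis
      using bhattacharyya_bit_le[OF nonneg nonneg ber_prod_nonneg] by (simp add: ber_prod_snoc)
  qed
  have "(\<Sum>y\<in>cube (Suc k). sqrt (D (Suc k) y * ber_prod (Suc k) y))
      \<le> (\<Sum>y\<in>cube k. fair_coin_affinity * sqrt (D k y * ber_prod k y))"
    unfolding sum_cube_Suc by (rule sum_mono) (rule step)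
  also have "\<dots> \<le> fair_coin_affinity * fair_coin_affinity ^ k"
    using Suc fair_coin_affinity_pos by (simp add: sum_distrib_left[symmetric])
  finally show ?case by simp
qed

subsection \<open>Total variation\<close>

lemma half_sum_abs_diff_eq:
  fixes P Q :: "'a \<Rightarrow> real"
  assumes "sum P A = 1" "sum Q A = 1"
  shows "(1/2) * (\<Sum>y\<in>A. \<bar>P y - Q y\<bar>) = 1 - (\<Sum>y\<in>A. min (P y) (Q y))"
proof -
  have "\<bar>P y - Q y\<bar> = P y + Q y - 2 * min (P y) (Q y)" for y
    by (simp add: min_def)
  then have "(\<Sum>y\<in>A. \<bar>P y - Q y\<bar>) = sum P A + sum Q A - 2 * (\<Sum>y\<in>A. min (P y) (Q y))"
    by (simp add: sum.distrib sum_subtractf sum_distrib_left)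
  then show ?thesis
    using assms by simp
qed

lemma min_le_sqrt_mult:
  fixes p q :: real
  assumes "0 \<le> p" "0 \<le> q"
  shows "min p q \<le> sqrt (p * q)"
proof -
  have "min p q = sqrt (min p q * min p q)"
    using assms by simp
  also have "\<dots> \<le> sqrt (p * q)"
    using assms by (intro real_sqrt_le_mono mult_mono) auto
  finally show ?thesis .
qed

lemma tv_dist_lin_dist_ber_prod_ge:
  assumes "\<forall>j<n. deg_le1_F2 m (L j)"
  shows "1 - fair_coin_affinity ^ n \<le> tv_dist n (lin_dist n m L) (ber_prod n)"
proof -
  have "(\<Sum>y\<in>cube n. lin_dist n m L y) = 1" "(\<Sum>y\<in>cube n. ber_prod n y) = 1"
    using sum_cube_marginals_consistent[OF marginals_consistent_lin_dist order_refl]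
      sum_cube_marginals_consistent[OF marginals_consistent_ber_prod order_refl]
    by (simp_all add: lin_dist_Nil ber_prod_def)
  then have "tv_dist n (lin_dist n m L) (ber_prod n)
      = 1 - (\<Sum>y\<in>cube n. min (lin_dist n m L y) (ber_prod n y))"
    unfolding tv_dist_def by (rule half_sum_abs_diff_eq)
  moreover have "(\<Sum>y\<in>cube n. min (lin_dist n m L y) (ber_prod n y))
      \<le> (\<Sum>y\<in>cube n. sqrt (lin_dist n m L y * ber_prod n y))"
    by (intro sum_mono min_le_sqrt_mult lin_dist_nonneg ber_prod_nonneg)
  moreover have "\<dots> \<le> fair_coin_affinity ^ n"
    by (rule bhattacharyya_ber_prod_le[OF marginals_consistent_lin_dist
          fair_or_constant_bits_lin_dist[OF assms] lin_dist_nonneg])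
      (simp_all add: lin_dist_Nil)
  ultimately show ?thesis
    by linarith
qed

theorem theorem7p1:
  shows "\<exists>c::real. c > 0 \<and> (\<exists>N::nat. \<forall>n\<ge>N. \<forall>(m::nat) (L::nat \<Rightarrow> bool list \<Rightarrow> bool).
           (\<forall>j<n. deg_le1_F2 m (L j)) \<longrightarrow>
           tv_dist n (lin_dist n m L) (ber_prod n) \<ge> 1 - 2 powr (- c * real n))"
proof (intro exI[of _ "- log 2 fair_coin_affinity"] exI[of _ 0] conjI allI impI)
  let ?c = "- log 2 fair_coin_affinity"
  show "?c > 0"
    using fair_coin_affinity_pos fair_coin_affinity_less_1 by simp
  fix n m :: nat and L :: "nat \<Rightarrow> bool list \<Rightarrow> bool"
  assume "\<forall>j<n. deg_le1_F2 m (L j)"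
  moreover have "2 powr (- ?c * real n) = fair_coin_affinity ^ n"
    using fair_coin_affinity_pos by (simp add: powr_powr[symmetric] powr_realpow)
  ultimately show "tv_dist n (lin_dist n m L) (ber_prod n) \<ge> 1 - 2 powr (- ?c * real n)"
    using tv_dist_lin_dist_ber_prod_ge by simp
qed

end
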